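(* For every forward trie $\mathsf{T}_f$ with $n$ nodes, over any alphabet, the suffix tree $\mathsf{STree}(\mathsf{T}_f)$ has $O(n^2)$ nodes and $O(n^2)$ edges. Moreover, there exist forward tries $\mathsf{T}_f$ with $n$ nodes, for arbitrarily large $n$ and over an alphabet of constant size, such that $\mathsf{STree}(\mathsf{T}_f)$ has $\Omega(n^2)$ nodes and $\Omega(n^2)$ edges.
   Context: An alphabet $\Sigma$ is a finite ordered set of characters, and $\sigma=|\Sigma|$. A forward trie $\mathsf{T}_f$ is a rooted tree with $n$ nodes in which every edge is directed from parent to child and labeled by a single character of $\Sigma$, such that the edges leaving any node carry pairwise distinct labels. For nodes $u,v$ with $u$ an ancestor of $v$ (possibly $u=v$), $\mathrm{str}_f(u,v)$ is the string of labels read along the downward path from $u$ to $v$. Define $\mathrm{Suffix}(\mathsf{T}_f)=\{\mathrm{str}_f(u,\ell): \ell \text{ a leaf},\ u \text{ an ancestor of } \ell\}$. For a finite set $S$ of strings, its compact tree is obtained from the trie of all prefixes of strings in $S$ (one node per prefix, the root being the empty string, an edge labeled $a$ from $X$ to $Xa$) by deleting every non-root node that has exactly one child and merging its two incident edges into one edge labeled by the concatenation of their labels. The suffix tree $\mathsf{STree}(\mathsf{T}_f)$ is the compact tree of $\mathrm{Suffix}(\mathsf{T}_f)$. *)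

theory Defs
  imports Complex_Main
begin

text \<open>Strings are lists of characters; characters are natural numbers, so that any
finite alphabet (up to renaming) is a finite set \<Sigma> of naturals.
A forward trie over \<Sigma> is represented by the set of strings spelled from the
root to its nodes (each node is identified with its root-to-node string):
a finite, nonempty, prefix-closed set of strings over \<Sigma>.  Distinctness of
outgoing labels is built in, since a node is determined by its string.\<close>

definition is_trie :: "nat set \<Rightarrow> nat list set \<Rightarrow> bool" where
  "is_trie \<Sigma> T \<longleftrightarrow> finite \<Sigma> \<and> finite T \<and> [] \<in> T \<and> T \<subseteq> lists \<Sigma> \<and>
     (\<forall>xs\<in>T. \<forall>k. take k xs \<in> T)"

definition trie_leaves :: "nat list set \<Rightarrow> nat list set" where
  "trie_leaves T = {l \<in> T. \<forall>a. l @ [a] \<notin> T}"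

text \<open>Suffix(T): labels of downward paths from an ancestor u of a leaf l to l,
i.e. the suffixes drop (length u) l of leaf strings.\<close>
definition trie_suffixes :: "nat list set \<Rightarrow> nat list set" where
  "trie_suffixes T = {drop (length u) l | u l. l \<in> trie_leaves T \<and> u \<in> T \<and> take (length u) l = u}"

definition prefixes_of :: "'a list set \<Rightarrow> 'a list set" where
  "prefixes_of S = {take k s | s k. s \<in> S}"

definition pchildren :: "'a list set \<Rightarrow> 'a list \<Rightarrow> 'a set" where
  "pchildren S X = {a. X @ [a] \<in> prefixes_of S}"

definition ct_nodes :: "'a list set \<Rightarrow> 'a list set" where
  "ct_nodes S = {X \<in> prefixes_of S. X = [] \<or> card (pchildren S X) \<noteq> 1}"

definition strict_pre :: "'a list \<Rightarrow> 'a list \<Rightarrow> bool" where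
  "strict_pre X Y \<longleftrightarrow> length X < length Y \<and> take (length X) Y = X"

text \<open>Edges of the compact tree: (X,Y) with X the nearest surviving proper
ancestor of surviving node Y (the edge is labelled drop (length X) Y).\<close>
definition ct_edges :: "'a list set \<Rightarrow> ('a list \<times> 'a list) set" where
  "ct_edges S = {(X, Y). X \<in> ct_nodes S \<and> Y \<in> ct_nodes S \<and> strict_pre X Y \<and>
      (\<forall>Z\<in>ct_nodes S. \<not> (strict_pre X Z \<and> strict_pre Z Y))}"

definition stree_nodes :: "nat list set \<Rightarrow> nat list set" where
  "stree_nodes T = ct_nodes (trie_suffixes T)"

definition stree_edges :: "nat list set \<Rightarrow> (nat list \<times> nat list) set" where
  "stree_edges T = ct_edges (trie_suffixes T)"

end

theory Submission
  imports Defs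
begin

text \<open>Every string of \<open>Suffix(T)\<close>, and every prefix of one, is the label of a downward path
from a node \<open>u\<close> to a node \<open>v\<close> of \<open>T\<close>, so the prefix trie of \<open>Suffix(T)\<close> has at most \<open>n\<^sup>2\<close>
nodes; the compact tree keeps a subset of them, and as a tree it has one edge fewer than nodes.
Conversely, in the comb \<open>0\<^sup>m\<close> followed by \<open>1\<^sup>m\<close> with a leaf labelled \<open>2\<close> hanging below each
node of the \<open>1\<close>-path, each of the \<open>m\<^sup>2\<close> strings \<open>0\<^sup>j 1\<^sup>i\<close> (\<open>j, i < m\<close>) is followed in
\<open>Suffix(T)\<close> both by \<open>1\<close> and by \<open>2\<close>, so it branches and survives in the suffix tree.\<close>

lemma strict_pre_of_common_extension:
  assumes "strict_pre X Y" "strict_pre X' Y" "length X < length X'"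
  shows "strict_pre X X'"
  using assms unfolding strict_pre_def by (metis min.strict_order_iff take_take)

lemma ct_edges_parent_unique:
  assumes e: "(X, Y) \<in> ct_edges S" and e': "(X', Y) \<in> ct_edges S"
  shows "X = X'"
proof -
  have "\<not> length X < length X'" "\<not> length X' < length X"
    using e e' strict_pre_of_common_extension unfolding ct_edges_def by blast+
  then show "X = X'"
    using e e' unfolding ct_edges_def strict_pre_def by simp
qed

lemma inj_on_snd_ct_edges: "inj_on snd (ct_edges S)"
  by (rule inj_onI) (metis ct_edges_parent_unique prod.collapse)

lemma take_in_prefixes_of: "s \<in> S \<Longrightarrow> take k s \<in> prefixes_of S"
  unfolding prefixes_of_def by blast

lemma nil_in_ct_nodes: "S \<noteq> {} \<Longrightarrow> [] \<in> ct_nodes S"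
  unfolding ct_nodes_def using take_in_prefixes_of[of _ S 0] by auto

text \<open>The parent of a non-root node \<open>Y\<close> is its longest proper prefix that is a node.\<close>
lemma snd_image_ct_edges:
  assumes "S \<noteq> {}"
  shows "snd ` ct_edges S = ct_nodes S - {[]}"
proof
  show "snd ` ct_edges S \<subseteq> ct_nodes S - {[]}"
    unfolding ct_edges_def strict_pre_def by auto
next
  show "ct_nodes S - {[]} \<subseteq> snd ` ct_edges S"
  proof
    fix Y assume Y: "Y \<in> ct_nodes S - {[]}"
    define K where "K = {k. k < length Y \<and> take k Y \<in> ct_nodes S}"
    have "finite K" unfolding K_def by simp
    moreover have "0 \<in> K"
      using Y nil_in_ct_nodes[OF assms] unfolding K_def by simp
    ultimately have k: "Max K \<in> K" and k_max: "\<And>k. k \<in> K \<Longrightarrow> k \<le> Max K"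
      by (auto intro: Max_in)
    have "(take (Max K) Y, Y) \<in> ct_edges S"
      unfolding ct_edges_def
    proof (intro CollectI case_prodI conjI ballI)
      show "take (Max K) Y \<in> ct_nodes S" "Y \<in> ct_nodes S" "strict_pre (take (Max K) Y) Y"
        using k Y unfolding K_def strict_pre_def by auto
      fix Z assume "Z \<in> ct_nodes S"
      then show "\<not> (strict_pre (take (Max K) Y) Z \<and> strict_pre Z Y)"
        using k_max[of "length Z"] unfolding K_def strict_pre_def by force
    qed
    then show "Y \<in> snd ` ct_edges S" by force
  qed
qed

lemma card_ct_edges:
  assumes "S \<noteq> {}"
  shows "card (ct_edges S) = card (ct_nodes S) - 1"
proof -
  have "card (ct_edges S) = card (ct_nodes S - {[]})"
    using card_image[OF inj_on_snd_ct_edges] snd_image_ct_edges[OF assms] by metis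
  also have "\<dots> = card (ct_nodes S) - 1"
    using nil_in_ct_nodes[OF assms] by (simp add: card_Diff_singleton_if)
  finally show ?thesis .
qed

lemma prefixes_of_trie_suffixes_subset:
  assumes "is_trie \<Sigma> T"
  shows "prefixes_of (trie_suffixes T) \<subseteq> (\<lambda>(u, v). drop (length u) v) ` (T \<times> T)"
proof
  fix x assume "x \<in> prefixes_of (trie_suffixes T)"
  then obtain k u l where x: "x = take k (drop (length u) l)"
    and l: "l \<in> trie_leaves T" and u: "u \<in> T"
    unfolding prefixes_of_def trie_suffixes_def by blast
  have "take (k + length u) l \<in> T"
    using assms l unfolding is_trie_def trie_leaves_def by blast
  moreover have "x = drop (length u) (take (k + length u) l)"
    using x by (simp add: take_drop)
  ultimately show "x \<in> (\<lambda>(u, v). drop (length u) v) ` (T \<times> T)"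
    using u by force
qed

lemma stree_nodes_subset:
  assumes "is_trie \<Sigma> T"
  shows "stree_nodes T \<subseteq> (\<lambda>(u, v). drop (length u) v) ` (T \<times> T)"
  using prefixes_of_trie_suffixes_subset[OF assms]
  unfolding stree_nodes_def ct_nodes_def by blast

lemma finite_stree_nodes:
  assumes "is_trie \<Sigma> T"
  shows "finite (stree_nodes T)"
proof (rule finite_subset[OF stree_nodes_subset[OF assms]])
  show "finite ((\<lambda>(u, v). drop (length u) v) ` (T \<times> T))"
    using assms unfolding is_trie_def by simp
qed

lemma card_stree_nodes_le:
  assumes "is_trie \<Sigma> T"
  shows "card (stree_nodes T) \<le> (card T)\<^sup>2"
proof -
  have "finite T" using assms unfolding is_trie_def by simp
  have "card (stree_nodes T) \<le> card ((\<lambda>(u, v). drop (length u) v) ` (T \<times> T))"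
    using stree_nodes_subset[OF assms] by (rule card_mono[rotated]) (simp add: \<open>finite T\<close>)
  also have "\<dots> \<le> card (T \<times> T)" by (rule card_image_le) (simp add: \<open>finite T\<close>)
  also have "\<dots> = (card T)\<^sup>2" by (simp add: card_cartesian_product power2_eq_square)
  finally show ?thesis .
qed

lemma trie_suffixes_nonempty:
  assumes "is_trie \<Sigma> T"
  shows "trie_suffixes T \<noteq> {}"
proof -
  have fin: "finite (length ` T)" and "T \<noteq> {}" using assms unfolding is_trie_def by auto
  then obtain l where l: "l \<in> T" "length l = Max (length ` T)"
    using Max_in[OF fin] by fastforce
  have "l @ [a] \<notin> T" for a
    using l Max_ge[OF fin imageI] by fastforce
  then have "l \<in> trie_leaves T" using l unfolding trie_leaves_def by blast
  moreover have "[] \<in> T" using assms unfolding is_trie_def by simp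
  ultimately have "drop (length []) l \<in> trie_suffixes T"
    unfolding trie_suffixes_def by (intro CollectI exI conjI) auto
  then show ?thesis by blast
qed

lemma card_stree_edges:
  "is_trie \<Sigma> T \<Longrightarrow> card (stree_edges T) = card (stree_nodes T) - 1"
  unfolding stree_edges_def stree_nodes_def
  by (rule card_ct_edges[OF trie_suffixes_nonempty])

definition comb_trie :: "nat \<Rightarrow> nat list set" where
  "comb_trie m = (\<lambda>k. replicate k 0) ` {0..m}
     \<union> (\<lambda>i. replicate m 0 @ replicate i 1) ` {0..m}
     \<union> (\<lambda>i. replicate m 0 @ replicate i 1 @ [2]) ` {0..m}"

lemma take_comb_trie: "xs \<in> comb_trie m \<Longrightarrow> take k xs \<in> comb_trie m"
proof -
  assume "xs \<in> comb_trie m"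
  then consider j where "xs = replicate j 0" "j \<le> m"
    | i where "xs = replicate m 0 @ replicate i 1" "i \<le> m"
    | i where "xs = replicate m 0 @ replicate i 1 @ [2]" "i \<le> m"
    unfolding comb_trie_def by auto
  then show ?thesis
  proof cases
    case arm: 2
    show ?thesis
    proof (cases "k \<le> m")
      case True
      with arm show ?thesis unfolding comb_trie_def by auto
    next
      case False
      with arm have "take k xs = replicate m 0 @ replicate (min (k - m) i) 1" by simp
      with arm show ?thesis unfolding comb_trie_def by auto
    qed
  next
    case tooth: 3
    consider "k \<le> m" | "m < k" "k \<le> m + i" | "m + i < k" by linarith
    then show ?thesis
    proof cases
      case 1
      with tooth show ?thesis unfolding comb_trie_def by auto
    next
      case 2
      with tooth have "take k xs = replicate m 0 @ replicate (k - m) 1" by simp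
      with 2 tooth show ?thesis unfolding comb_trie_def by auto
    next
      case 3
      with tooth \<open>xs \<in> comb_trie m\<close> show ?thesis by simp
    qed
  qed (auto simp: comb_trie_def)
qed

lemma is_trie_comb_trie: "is_trie {0, 1, 2} (comb_trie m)"
  unfolding is_trie_def using take_comb_trie
  by (auto simp: comb_trie_def intro: image_eqI[where x=0])

lemma two_notin_butlast_comb_trie: "xs \<in> comb_trie m \<Longrightarrow> 2 \<notin> set (butlast xs)"
  unfolding comb_trie_def by (auto simp: butlast_append dest: in_set_butlastD)

lemma comb_trie_tooth_leaf:
  assumes "i \<le> m"
  shows "replicate m 0 @ replicate i 1 @ [2] \<in> trie_leaves (comb_trie m)"
  using assms two_notin_butlast_comb_trie[of "(replicate m 0 @ replicate i 1 @ [2]) @ [_]" m]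
  unfolding trie_leaves_def by (auto simp: comb_trie_def butlast_append)

lemma comb_trie_suffix:
  assumes "j \<le> m" "i \<le> m"
  shows "replicate j 0 @ replicate i 1 @ [2] \<in> trie_suffixes (comb_trie m)"
proof -
  let ?u = "replicate (m - j) (0::nat)"
  have "replicate m 0 = ?u @ replicate j 0"
    using assms(1) by (simp flip: replicate_add)
  then have leaf: "?u @ replicate j 0 @ replicate i 1 @ [2] \<in> trie_leaves (comb_trie m)"
    using comb_trie_tooth_leaf[OF assms(2)] by simp
  have "?u \<in> comb_trie m" unfolding comb_trie_def by auto
  with leaf show ?thesis unfolding trie_suffixes_def by force
qed

lemma comb_trie_branching_node:
  assumes "j \<le> m" "i < m"
  shows "replicate j 0 @ replicate i 1 \<in> stree_nodes (comb_trie m)"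
proof -
  let ?S = "trie_suffixes (comb_trie m)" and ?X = "replicate j (0::nat) @ replicate i 1"
  have two: "?X @ [2] \<in> ?S" and one: "(?X @ [1]) @ [2] \<in> ?S"
    using comb_trie_suffix[OF assms(1), of i] comb_trie_suffix[OF assms(1), of "Suc i"] assms(2)
    by (simp_all add: replicate_append_same[symmetric])
  have "1 \<in> pchildren ?S ?X" "2 \<in> pchildren ?S ?X"
    using take_in_prefixes_of[OF one, of "length ?X + 1"] take_in_prefixes_of[OF two, of "length ?X + 1"]
    unfolding pchildren_def by simp_all
  then have "card (pchildren ?S ?X) \<noteq> 1"
    by (auto simp: card_1_singleton_iff)
  moreover have "?X \<in> prefixes_of ?S"
    using take_in_prefixes_of[OF two, of "length ?X"] by simp
  ultimately show ?thesis
    unfolding stree_nodes_def ct_nodes_def by simp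
qed

lemma card_comb_trie_le: "card (comb_trie m) \<le> 3 * (m + 1)"
proof -
  have "card (comb_trie m) \<le> (m + 1) + (m + 1) + (m + 1)"
    unfolding comb_trie_def
    by (intro card_Un_le[THEN order_trans] add_mono card_image_le[THEN order_trans]) simp_all
  then show ?thesis by simp
qed

lemma inj_on_replicate_0_1: "inj_on (\<lambda>(j, i). replicate j (0::nat) @ replicate i 1) A"
proof (rule inj_onI, clarify)
  fix j i j' i' :: nat
  assume e: "replicate j 0 @ replicate i 1 = replicate j' 0 @ replicate i' (1::nat)"
  show "j = j' \<and> i = i'"
    using arg_cong[OF e, of "\<lambda>s. length (filter (\<lambda>x. x = 0) s)"]
      arg_cong[OF e, of "\<lambda>s. length (filter (\<lambda>x. x = 1) s)"] by simp
qed

lemma card_comb_trie_ge: "m + 1 \<le> card (comb_trie m)"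
proof -
  have "card ((\<lambda>k. replicate k (0::nat)) ` {0..m}) = m + 1"
    by (subst card_image) (auto simp: inj_on_def)
  moreover have "card ((\<lambda>k. replicate k (0::nat)) ` {0..m}) \<le> card (comb_trie m)"
    by (rule card_mono) (auto simp: comb_trie_def)
  ultimately show ?thesis by simp
qed

lemma card_stree_nodes_comb_trie: "m\<^sup>2 \<le> card (stree_nodes (comb_trie m))"
proof -
  let ?f = "\<lambda>(j, i). replicate j (0::nat) @ replicate i 1"
  have "m\<^sup>2 = card (?f ` ({..<m} \<times> {..<m}))"
    by (subst card_image[OF inj_on_replicate_0_1]) (simp add: power2_eq_square)
  also have "\<dots> \<le> card (stree_nodes (comb_trie m))"
    by (rule card_mono[OF finite_stree_nodes[OF is_trie_comb_trie]])
      (auto intro: comb_trie_branching_node[unfolded One_nat_def])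
  finally show ?thesis .
qed

lemma card_comb_trie_sq_le_stree_edges:
  assumes "3 \<le> m"
  shows "(card (comb_trie m))\<^sup>2 \<le> 18 * card (stree_edges (comb_trie m))"
proof -
  obtain k where m: "m = k + 3" using assms by (metis add.commute le_Suc_ex)
  have "(card (comb_trie m))\<^sup>2 \<le> (3 * (m + 1))\<^sup>2"
    using card_comb_trie_le by (rule power_mono) simp
  also have "\<dots> \<le> 18 * (m\<^sup>2 - 1)"
    unfolding m by (simp add: power2_eq_square algebra_simps)
  also have "\<dots> \<le> 18 * card (stree_edges (comb_trie m))"
    using card_stree_nodes_comb_trie[of m] card_stree_edges[OF is_trie_comb_trie] by simp
  finally show ?thesis .
qed

lemma comb_trie_stree_quadratic:
  "\<exists>T. is_trie {0, 1, 2} T \<and> card T \<ge> N \<and>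
      real (card (stree_nodes T)) \<ge> 1 / 18 * real ((card T)^2) \<and>
      real (card (stree_edges T)) \<ge> 1 / 18 * real ((card T)^2)"
proof (intro exI conjI)
  let ?T = "comb_trie (N + 3)"
  have edges: "(card ?T)\<^sup>2 \<le> 18 * card (stree_edges ?T)"
    by (rule card_comb_trie_sq_le_stree_edges) simp
  then show "real (card (stree_edges ?T)) \<ge> 1 / 18 * real ((card ?T)^2)"
    using of_nat_mono[OF edges, where 'a = real] by simp
  have "card (stree_edges ?T) \<le> card (stree_nodes ?T)"
    using card_stree_edges[OF is_trie_comb_trie] by simp
  with edges have nodes: "(card ?T)\<^sup>2 \<le> 18 * card (stree_nodes ?T)" by linarith
  then show "real (card (stree_nodes ?T)) \<ge> 1 / 18 * real ((card ?T)^2)"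
    using of_nat_mono[OF nodes, where 'a = real] by simp
  show "is_trie {0, 1, 2} ?T" "card ?T \<ge> N"
    using is_trie_comb_trie card_comb_trie_ge[of "N + 3"] by auto
qed

theorem theorem1:
  shows "(\<exists>c::nat. \<forall>\<Sigma> T. is_trie \<Sigma> T \<longrightarrow>
            card (stree_nodes T) \<le> c * (card T)^2 \<and>
            card (stree_edges T) \<le> c * (card T)^2)
       \<and> (\<exists>\<Sigma>::nat set. finite \<Sigma> \<and> (\<exists>c::real. c > 0 \<and>
            (\<forall>N. \<exists>T. is_trie \<Sigma> T \<and> card T \<ge> N \<and>
               real (card (stree_nodes T)) \<ge> c * real ((card T)^2) \<and>
               real (card (stree_edges T)) \<ge> c * real ((card T)^2))))"
proof -
  have "is_trie \<Sigma> T \<Longrightarrow>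
      card (stree_nodes T) \<le> 1 * (card T)^2 \<and> card (stree_edges T) \<le> 1 * (card T)^2" for \<Sigma> T
    using card_stree_nodes_le[of \<Sigma> T] card_stree_edges[of \<Sigma> T] by simp
  moreover have "finite {0, 1, 2 :: nat}" "(0::real) < 1 / 18" by simp_all
  ultimately show ?thesis using comb_trie_stree_quadratic by blast
qed

end
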